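(* There exists a perfect single-error-correcting code in $S_5$ with respect to the cyclic Kendall's $\tau$-distance; that is, there is a subset $\mathcal{C}\subseteq S_5$ such that for every $\pi\in S_5$ there is exactly one $\sigma\in\mathcal{C}$ with $d_\kappa(\sigma,\pi)\leq 1$.
   Context: $S_n$ denotes the set of all permutations of an $n$-element set, written as sequences $\sigma=[\sigma(1),\dots,\sigma(n)]$, where $\sigma(i)$ is the element in position $i$. A c-adjacent transposition applied to $\sigma$ either exchanges the entries in positions $i$ and $i+1$ for some $1\leq i\leq n-1$, or exchanges the entries $\sigma(1)$ and $\sigma(n)$ in positions $1$ and $n$. The cyclic Kendall's $\tau$-distance $d_\kappa(\sigma,\pi)$ is the minimum number of c-adjacent transpositions needed to transform $\sigma$ into $\pi$. *)

theory Defs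
  imports Main
begin

text \<open>Permutations of {1..n} written as sequences (lists); position i of the
paper corresponds to list index i-1.\<close>
definition Sym :: "nat \<Rightarrow> nat list set" where
  "Sym n = {xs. distinct xs \<and> set xs = {1..n}}"

definition swap_pos :: "'a list \<Rightarrow> nat \<Rightarrow> nat \<Rightarrow> 'a list" where
  "swap_pos xs i j = xs[i := xs ! j, j := xs ! i]"

definition c_adj :: "'a list \<Rightarrow> 'a list \<Rightarrow> bool" where
  "c_adj xs ys \<longleftrightarrow>
     (\<exists>i. i + 1 < length xs \<and> ys = swap_pos xs i (i + 1))
     \<or> (0 < length xs \<and> ys = swap_pos xs 0 (length xs - 1))"

definition d_kappa :: "'a list \<Rightarrow> 'a list \<Rightarrow> nat" where
  "d_kappa \<sigma> \<pi> = (LEAST k. (c_adj ^^ k) \<sigma> \<pi>)"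

end

theory Submission
  imports Defs "HOL-Combinatorics.Multiset_Permutations"
begin

text \<open>Radius-1 balls in S5 have
6 elements and 20 \<cdot> 6 = 120 = 5!, so perfectness means every permutation lies in
exactly one ball, which is checked by evaluation on the list of neighbours. Reading
d_kappa \<le> 1 as "equal or c-adjacent" needs the LEAST in d_kappa to range over a
nonempty set, i.e. c-adjacent transpositions must connect S5; bubble sort, which only
uses adjacent transpositions, sorts every permutation of S5 in 10 passes.\<close>

lemma length_swap_pos [simp]: "length (swap_pos xs i j) = length xs"
  by (simp add: swap_pos_def)

lemma swap_pos_eq_Nil_iff [simp]: "swap_pos xs i j = [] \<longleftrightarrow> xs = []"
  by (simp add: swap_pos_def)

lemma swap_pos_swap_pos:
  assumes "i < length xs" "j < length xs"
  shows "swap_pos (swap_pos xs i j) i j = xs"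
  using assms unfolding swap_pos_def
  by (cases "i = j") (auto simp: nth_list_update list_update_swap intro!: nth_equalityI)

lemma c_adj_sym: "c_adj xs ys \<Longrightarrow> c_adj ys xs"
  unfolding c_adj_def by (auto simp: swap_pos_swap_pos)

lemma c_adj_commute: "c_adj xs ys \<longleftrightarrow> c_adj ys xs"
  using c_adj_sym by blast

lemma c_adj_rtranclp_sym: "c_adj\<^sup>*\<^sup>* xs ys \<Longrightarrow> c_adj\<^sup>*\<^sup>* ys xs"
  by (induction rule: rtranclp_induct)
    (auto intro: converse_rtranclp_into_rtranclp c_adj_sym)

definition c_adj_neighbours :: "'a list \<Rightarrow> 'a list list" where
  "c_adj_neighbours xs =
     map (\<lambda>i. swap_pos xs i (Suc i)) [0..<length xs - 1] @
     (if xs = [] then [] else [swap_pos xs 0 (length xs - 1)])"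

lemma set_c_adj_neighbours: "ys \<in> set (c_adj_neighbours xs) \<longleftrightarrow> c_adj xs ys"
  unfolding c_adj_neighbours_def c_adj_def by (cases xs) auto

lemma d_kappa_le_1_iff:
  assumes "c_adj\<^sup>*\<^sup>* \<sigma> \<pi>"
  shows "d_kappa \<sigma> \<pi> \<le> 1 \<longleftrightarrow> \<sigma> = \<pi> \<or> c_adj \<sigma> \<pi>"
proof
  obtain k where "(c_adj ^^ k) \<sigma> \<pi>"
    using assms by (metis rtranclp_imp_relpowp)
  then have "(c_adj ^^ d_kappa \<sigma> \<pi>) \<sigma> \<pi>"
    unfolding d_kappa_def by (rule LeastI)
  moreover assume "d_kappa \<sigma> \<pi> \<le> 1"
  ultimately show "\<sigma> = \<pi> \<or> c_adj \<sigma> \<pi>"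
    by (cases "d_kappa \<sigma> \<pi>") auto
next
  assume "\<sigma> = \<pi> \<or> c_adj \<sigma> \<pi>"
  then have "(c_adj ^^ 0) \<sigma> \<pi> \<or> (c_adj ^^ 1) \<sigma> \<pi>"
    by auto
  then show "d_kappa \<sigma> \<pi> \<le> 1"
    unfolding d_kappa_def by (metis Least_le le_trans zero_le_one)
qed

fun bubble_step :: "'a::linorder list \<Rightarrow> 'a list" where
  "bubble_step (x # y # zs) = (if y < x then y # x # zs else x # bubble_step (y # zs))"
| "bubble_step xs = xs"

lemma bubble_step_swaps_adjacent:
  "bubble_step xs = xs \<or> (\<exists>i. i + 1 < length xs \<and> bubble_step xs = swap_pos xs i (i + 1))"
proof (induction xs rule: bubble_step.induct)
  case (1 x y zs)
  show ?case
  proof (cases "y < x")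
    case True
    then show ?thesis
      by (auto simp: swap_pos_def intro!: exI[of _ 0])
  next
    case False
    with "1" consider "bubble_step (y # zs) = y # zs"
      | i where "i + 1 < length (y # zs)" "bubble_step (y # zs) = swap_pos (y # zs) i (i + 1)"
      by blast
    then show ?thesis
    proof cases
      case 1
      with False show ?thesis by simp
    next
      case (2 i)
      with False show ?thesis
        by (intro disjI2 exI[of _ "Suc i"]) (simp add: swap_pos_def)
    qed
  qed
qed auto

lemma c_adj_rtranclp_funpow_bubble_step: "c_adj\<^sup>*\<^sup>* xs ((bubble_step ^^ n) xs)"
proof (induction n)
  case (Suc n)
  have "c_adj\<^sup>*\<^sup>* ys (bubble_step ys)" for ys :: "'a list"
    using bubble_step_swaps_adjacent[of ys] unfolding c_adj_def by auto
  with Suc show ?case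
    by (auto intro: rtranclp_trans)
qed simp

lemma length_filter_eq_1_imp_ex1:
  assumes "length (filter P xs) = 1"
  shows "\<exists>!x. x \<in> set xs \<and> P x"
proof -
  obtain a where "filter P xs = [a]"
    using assms by (auto simp: length_Suc_conv)
  then have "{x \<in> set xs. P x} = {a}"
    by (metis set_filter empty_set list.simps(15))
  then show ?thesis
    by (intro ex1I[of _ a]) blast+
qed

lemma Sym_5_eq: "Sym 5 = set (permutations_of_list_impl [1, 2, 3, 4, 5 :: nat])"
proof -
  have "{1..5 :: nat} = {1, 2, 3, 4, 5}"
    by auto
  then have mset_eq: "mset [1, 2, 3, 4, 5 :: nat] = mset_set {1..5}"
    by simp
  show ?thesis
    unfolding set_permutations_of_list_impl mset_eq Sym_def
      permutations_of_set_altdef[OF finite_atLeastAtMost, symmetric] permutations_of_set_def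
    by blast
qed

definition perfect_code_S5 :: "nat list list" where
  "perfect_code_S5 =
    [[1,2,3,5,4], [5,2,4,3,1], [2,1,4,5,3], [1,5,2,4,3], [1,3,4,2,5],
     [3,1,5,2,4], [2,3,5,4,1], [4,1,2,3,5], [3,4,2,5,1], [1,4,5,3,2],
     [4,5,3,2,1], [5,1,3,4,2], [2,5,1,3,4], [3,2,1,4,5], [4,3,1,5,2],
     [2,4,3,1,5], [4,2,5,1,3], [3,5,4,1,2], [5,4,1,2,3], [5,3,2,1,4]]"

lemma perfect_code_S5_subset: "set perfect_code_S5 \<subseteq> Sym 5"
  unfolding Sym_5_eq by code_simp

lemma funpow_bubble_step_Sym_5: "\<forall>\<pi> \<in> Sym 5. (bubble_step ^^ 10) \<pi> = [1, 2, 3, 4, 5]"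
  unfolding Sym_5_eq by code_simp

lemma perfect_code_S5_covers_once:
  "\<forall>\<pi> \<in> Sym 5.
     length (filter (\<lambda>\<sigma>. \<sigma> = \<pi> \<or> \<sigma> \<in> set (c_adj_neighbours \<pi>)) perfect_code_S5) = 1"
  unfolding Sym_5_eq by code_simp

lemma c_adj_connected_Sym_5:
  assumes "\<sigma> \<in> Sym 5" "\<pi> \<in> Sym 5"
  shows "c_adj\<^sup>*\<^sup>* \<sigma> \<pi>"
proof -
  have "c_adj\<^sup>*\<^sup>* \<rho> [1, 2, 3, 4, 5]" if "\<rho> \<in> Sym 5" for \<rho>
    using c_adj_rtranclp_funpow_bubble_step[of \<rho> 10] funpow_bubble_step_Sym_5 that by simp
  with assms show ?thesis
    by (metis c_adj_rtranclp_sym rtranclp_trans)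
qed

theorem mainTheorem3:
  shows "\<exists>C \<subseteq> Sym 5. \<forall>\<pi> \<in> Sym 5. \<exists>!\<sigma>. \<sigma> \<in> C \<and> d_kappa \<sigma> \<pi> \<le> 1"
proof (intro exI[of _ "set perfect_code_S5"] conjI ballI)
  show "set perfect_code_S5 \<subseteq> Sym 5"
    by (rule perfect_code_S5_subset)
  fix \<pi> assume \<pi>: "\<pi> \<in> Sym 5"
  have ball_eq: "\<sigma> \<in> set perfect_code_S5 \<and> d_kappa \<sigma> \<pi> \<le> 1 \<longleftrightarrow>
        \<sigma> \<in> set perfect_code_S5 \<and> (\<sigma> = \<pi> \<or> \<sigma> \<in> set (c_adj_neighbours \<pi>))" for \<sigma>
    using d_kappa_le_1_iff[OF c_adj_connected_Sym_5[OF _ \<pi>], of \<sigma>] perfect_code_S5_subset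
    by (auto simp: set_c_adj_neighbours c_adj_commute)
  show "\<exists>!\<sigma>. \<sigma> \<in> set perfect_code_S5 \<and> d_kappa \<sigma> \<pi> \<le> 1"
    unfolding ball_eq
    by (rule length_filter_eq_1_imp_ex1) (use perfect_code_S5_covers_once \<pi> in blast)
qed

end
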